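(* Let $n\geq 1$ and $s\geq 1$ be integers. Let $G$ be a connected graph on $n+s$ vertices and let $S\subseteq V(G)$ with $|S|=s$. If every non-terminal level with respect to $S$ contains at least $3$ vertices, then \[ \sigma(S)\leq \frac{1}{6}\left(n^2+3n+2\right). \]
   Context: For a connected graph $G$ and $\emptyset\neq S\subseteq V(G)$, $d_G(S,u)=\min\{d_G(u,v): v\in S\}$, and the status of $S$ is $\sigma(S)=\sigma_G(S)=\sum_{u\in V(G)} d_G(S,u)$. For $i\geq 1$, the $i$-th level with respect to $S$ is the set of vertices $u$ with $d_G(S,u)=i$. The terminal level is the nonempty level with the largest index $i$; the non-terminal levels are all levels $1,\dots,r$ preceding the terminal level $r+1$ (all of which are nonempty by connectivity). *)

theory Defs
  imports Complex_Main
begin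

definition simple_graph :: "'a set \<Rightarrow> ('a \<Rightarrow> 'a \<Rightarrow> bool) \<Rightarrow> bool" where
  "simple_graph V E \<longleftrightarrow> finite V \<and>
     (\<forall>u v. E u v \<longrightarrow> u \<in> V \<and> v \<in> V \<and> u \<noteq> v \<and> E v u)"

definition is_walk :: "'a set \<Rightarrow> ('a \<Rightarrow> 'a \<Rightarrow> bool) \<Rightarrow> 'a list \<Rightarrow> bool" where
  "is_walk V E xs \<longleftrightarrow> xs \<noteq> [] \<and> set xs \<subseteq> V \<and>
     (\<forall>i. Suc i < length xs \<longrightarrow> E (xs ! i) (xs ! Suc i))"

definition connected_graph :: "'a set \<Rightarrow> ('a \<Rightarrow> 'a \<Rightarrow> bool) \<Rightarrow> bool" where
  "connected_graph V E \<longleftrightarrow> V \<noteq> {} \<and>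
     (\<forall>u\<in>V. \<forall>v\<in>V. \<exists>xs. is_walk V E xs \<and> hd xs = u \<and> last xs = v)"

definition gdist :: "'a set \<Rightarrow> ('a \<Rightarrow> 'a \<Rightarrow> bool) \<Rightarrow> 'a \<Rightarrow> 'a \<Rightarrow> nat" where
  "gdist V E u v = (LEAST k. \<exists>xs. is_walk V E xs \<and> hd xs = u \<and> last xs = v \<and> length xs = Suc k)"

definition set_dist :: "'a set \<Rightarrow> ('a \<Rightarrow> 'a \<Rightarrow> bool) \<Rightarrow> 'a set \<Rightarrow> 'a \<Rightarrow> nat" where
  "set_dist V E S u = Min ((\<lambda>v. gdist V E u v) ` S)"

definition status :: "'a set \<Rightarrow> ('a \<Rightarrow> 'a \<Rightarrow> bool) \<Rightarrow> 'a set \<Rightarrow> nat" where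
  "status V E S = (\<Sum>u\<in>V. set_dist V E S u)"

definition level :: "'a set \<Rightarrow> ('a \<Rightarrow> 'a \<Rightarrow> bool) \<Rightarrow> 'a set \<Rightarrow> nat \<Rightarrow> 'a set" where
  "level V E S i = {u \<in> V. set_dist V E S u = i}"

definition terminal_index :: "'a set \<Rightarrow> ('a \<Rightarrow> 'a \<Rightarrow> bool) \<Rightarrow> 'a set \<Rightarrow> nat" where
  "terminal_index V E S = Max (set_dist V E S ` V)"

end

theory Submission
  imports Defs
begin

text \<open>Every vertex outside S lies at a level i with 1 \<le> i \<le> R, where R is the terminal
  index. Counting from the top, \<sigma>(S) + (\<Sum>u\<in>V - S. R - d(S,u)) = R n, and each
  non-terminal level i contributes at least 3 (R - i) to the second sum. Hence
  6 \<sigma>(S) \<le> 6 R n - 9 R (R - 1) = n^2 + 3 n + 2 - (n - 3 R + 1) (n - 3 R + 2),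
  and a product of two consecutive integers is nonnegative.\<close>

lemma double_sum_upper_differences: "2 * (\<Sum>i\<in>{1..<R}. R - i) = R * (R - 1 :: nat)"
proof -
  have "(\<Sum>i\<in>{1..<R}. R - i) = (\<Sum>i\<in>{1..<R}. i)"
    using sum.atLeastLessThan_rev[of "\<lambda>i. i" 1 R] by simp
  also have "\<dots> = (\<Sum>i<R. i)"
    by (rule sum.mono_neutral_left) auto
  also have "2 * \<dots> = R * (R - 1)"
    by (induction R) (auto simp: algebra_simps)
  finally show ?thesis .
qed

lemma sum_le_of_thick_levels:
  fixes f :: "'a \<Rightarrow> nat"
  assumes fin: "finite W" and bounded: "\<forall>u\<in>W. f u \<le> R"
    and thick: "\<forall>i. 1 \<le> i \<and> i < R \<longrightarrow> 3 \<le> card {u\<in>W. f u = i}"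
  shows "6 * (\<Sum>u\<in>W. f u) \<le> card W ^ 2 + 3 * card W + 2"
proof -
  define n where "n = card W"
  define A where "A = (\<Sum>u\<in>W. f u)"
  define C where "C = (\<Sum>i\<in>{1..<R}. R - i)"
  have "A + (\<Sum>u\<in>W. R - f u) = (\<Sum>u\<in>W. R)"
    unfolding A_def sum.distrib[symmetric] using bounded by (intro sum.cong) auto
  then have complement: "A + (\<Sum>u\<in>W. R - f u) = R * n"
    by (simp add: n_def)
  have "3 * C = (\<Sum>i\<in>{1..<R}. 3 * (R - i))"
    by (simp add: C_def sum_distrib_left)
  also have "\<dots> \<le> (\<Sum>i\<in>{1..<R}. card {u\<in>W. f u = i} * (R - i))"
    using thick by (intro sum_mono mult_right_mono) auto
  also have "\<dots> = (\<Sum>i\<in>{1..<R}. \<Sum>u\<in>{u\<in>W. f u = i}. R - f u)"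
    by (intro sum.cong) auto
  also have "\<dots> = (\<Sum>u\<in>(\<Union>i\<in>{1..<R}. {u\<in>W. f u = i}). R - f u)"
    using fin by (intro sum.UNION_disjoint[symmetric]) auto
  also have "\<dots> \<le> (\<Sum>u\<in>W. R - f u)"
    using fin by (intro sum_mono2) auto
  finally have "3 * C \<le> (\<Sum>u\<in>W. R - f u)" .
  with complement have "A + 3 * C \<le> R * n"
    by linarith
  then have "int A + 3 * int C \<le> int R * int n"
    by (metis of_nat_add of_nat_le_iff of_nat_mult of_nat_numeral)
  moreover have "2 * C + R = R * R"
    using double_sum_upper_differences[of R] unfolding C_def[symmetric]
    by (cases R) simp_all
  then have "2 * int C + int R = int R * int R"
    by (metis of_nat_add of_nat_mult of_nat_numeral)
  moreover have "0 \<le> (int n - 3 * int R + 1) * (int n - 3 * int R + 2)"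
    by (smt (verit) mult_nonneg_nonneg mult_nonpos_nonpos)
  ultimately have "int (6 * A) \<le> int (n ^ 2 + 3 * n + 2)"
    by (simp add: algebra_simps power2_eq_square)
  then show ?thesis
    unfolding A_def n_def by (simp only: of_nat_le_iff)
qed

lemma gdist_self:
  assumes "u \<in> V"
  shows "gdist V E u u = 0"
proof -
  have "is_walk V E [u]" using assms by (simp add: is_walk_def)
  then show ?thesis unfolding gdist_def
    by (intro Least_eq_0) (rule exI[of _ "[u]"], simp)
qed

lemma set_dist_eq_0:
  assumes "finite S" "S \<subseteq> V" "u \<in> S"
  shows "set_dist V E S u = 0"
proof -
  have "gdist V E u u \<in> (\<lambda>v. gdist V E u v) ` S" using assms(3) by (rule imageI)
  then have "Min ((\<lambda>v. gdist V E u v) ` S) \<le> gdist V E u u" using assms(1) by simp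
  then show ?thesis using gdist_self[of u V E] assms(2,3) by (auto simp: set_dist_def)
qed

lemma set_dist_le_terminal_index:
  assumes "finite V" "u \<in> V"
  shows "set_dist V E S u \<le> terminal_index V E S"
  unfolding terminal_index_def using assms by (intro Max_ge) auto

lemma status_eq_sum_outside:
  assumes "finite V" "S \<subseteq> V"
  shows "status V E S = (\<Sum>u\<in>V - S. set_dist V E S u)"
proof -
  have "finite S" using assms finite_subset by blast
  then have "(\<Sum>u\<in>S. set_dist V E S u) = 0"
    using set_dist_eq_0[OF _ assms(2)] by simp
  then show ?thesis
    unfolding status_def using assms by (simp add: sum.subset_diff[of S V])
qed

lemma level_eq_outside:
  assumes "finite S" "S \<subseteq> V" "1 \<le> i"
  shows "level V E S i = {u \<in> V - S. set_dist V E S u = i}"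
  using assms set_dist_eq_0[OF assms(1,2)] unfolding level_def by auto

theorem lemma8:
  fixes V :: "'a set" and E :: "'a \<Rightarrow> 'a \<Rightarrow> bool" and S :: "'a set" and n s :: nat
  assumes "n \<ge> 1" and "s \<ge> 1"
    and "simple_graph V E" and "connected_graph V E"
    and "card V = n + s"
    and "S \<subseteq> V" and "card S = s"
    and "\<forall>i. 1 \<le> i \<and> i < terminal_index V E S \<longrightarrow> card (level V E S i) \<ge> 3"
  shows "real (status V E S) \<le> (real n ^ 2 + 3 * real n + 2) / 6"
proof -
  have "finite V" using assms(3) by (simp add: simple_graph_def)
  then have "finite S" using assms(6) finite_subset by blast
  have bounded: "\<forall>u\<in>V - S. set_dist V E S u \<le> terminal_index V E S"
    using set_dist_le_terminal_index[OF \<open>finite V\<close>] by simp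
  have thick: "\<forall>i. 1 \<le> i \<and> i < terminal_index V E S \<longrightarrow>
      3 \<le> card {u \<in> V - S. set_dist V E S u = i}"
    using assms(8) level_eq_outside[OF \<open>finite S\<close> assms(6)] by simp
  have "6 * status V E S \<le> card (V - S) ^ 2 + 3 * card (V - S) + 2"
    unfolding status_eq_sum_outside[OF \<open>finite V\<close> assms(6)]
    using \<open>finite V\<close> by (intro sum_le_of_thick_levels[OF _ bounded thick]) simp
  moreover have "card (V - S) = n"
    using assms(5-7) \<open>finite S\<close> by (simp add: card_Diff_subset)
  ultimately have "real (6 * status V E S) \<le> real (n ^ 2 + 3 * n + 2)"
    by (simp only: of_nat_le_iff)
  then show ?thesis by simp
qed

end
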